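(* Let $r\ge1$, let $\mathbf s=(s_1,\dots,s_r)$ be a composition with $s_1>1$, and let $\xi=(\xi_1,\dots,\xi_r)\in\mathbb{C}^r$ and $\mathbf t=(t_1,\dots,t_r)$ satisfy condition (E). Then $\mathrm{Di}(\mathbf F_{\xi,\mathbf t};\mathbf s)=\alpha_0^1\big(x_0^{s_1-1}x_{1,\xi,\bar t_1}\,x_0^{s_2-1}x_{2,\xi,\bar t_2}\cdots x_0^{s_r-1}x_{r,\xi,\bar t_r}\big)$.
   Context: Colored Hurwitz polyzetas. For a composition $\mathbf s=(s_1,\dots,s_r)$ (positive integers), $\xi=(\xi_1,\dots,\xi_r)\in\mathbb{C}^r$ and real $\mathbf t=(t_1,\dots,t_r)$, set $\mathrm{Di}(\mathbf F_{\xi,\mathbf t};\mathbf s)=\sum_{n_1>\cdots>n_r>0}\frac{\xi_1^{n_1}\cdots\xi_r^{n_r}}{(n_1-t_1)^{s_1}\cdots(n_r-t_r)^{s_r}}$. Condition (E): for all $i$, $|\xi_1\xi_2\cdots\xi_i|\le 1$ and $t_i\in\,]-\infty,1[$. Differences of parameters. $\bar t_i=t_i-t_{i+1}$ for $1\le i<r$, and $\bar t_r=t_r$; thus $t_i=\bar t_i+\cdots+\bar t_r$. Letters and forms. The alphabet consists of $x_0$ and letters $x_{i,\xi,\tau}$ with $i\ge1$, $\xi$ a sequence of complex numbers and $\tau$ a real parameter. The associated differential forms are $\omega_0(z)=\frac{dz}{z}$ and $\omega_{i,\xi,\tau}(z)=\frac{\xi_1\cdots\xi_i}{1-\xi_1\cdots\xi_i\,z}\,\frac{dz}{z^{\tau}}$.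 Iterated integrals. For a word $w=y_1y_2\cdots y_k$ with associated forms $\omega^{(1)},\dots,\omega^{(k)}$, the Chen iterated integral along $[0,z]$ is defined recursively by $\alpha_0^z(1)=1$ and $\alpha_0^z(y_1y_2\cdots y_k)=\int_0^z\omega^{(1)}(z_1)\,\alpha_0^{z_1}(y_2\cdots y_k)$. *)

theory Defs
  imports "HOL-Analysis.Analysis"
begin

text \<open>Lists are 0-indexed: s!0 = s_1, xi!0 = xi_1, t!0 = t_1.\<close>

definition Di :: "complex list \<Rightarrow> real list \<Rightarrow> nat list \<Rightarrow> complex" where
  "Di xi t s = infsum
     (\<lambda>ns. \<Prod>i<length s. xi!i ^ (ns!i) / (complex_of_real (real (ns!i) - t!i)) ^ (s!i))
     {ns :: nat list. length ns = length s \<and> sorted_wrt (>) ns \<and> (\<forall>n\<in>set ns. 0 < n)}"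

definition condE :: "complex list \<Rightarrow> real list \<Rightarrow> bool" where
  "condE xi t \<longleftrightarrow> (\<forall>i\<in>{1..length xi}. norm (prod_list (take i xi)) \<le> 1 \<and> t!(i-1) < 1)"

definition tbar :: "real list \<Rightarrow> nat \<Rightarrow> real" where
  "tbar t i = (if Suc i < length t then t!i - t!(Suc i) else t!i)"

datatype letter = X0 | XL nat "complex list" real

fun omega :: "letter \<Rightarrow> real \<Rightarrow> complex" where
  "omega X0 z = complex_of_real (1 / z)"
| "omega (XL i xi \<tau>) z =
     prod_list (take i xi) / (1 - prod_list (take i xi) * complex_of_real z)
     * complex_of_real (1 / z powr \<tau>)"

primrec alpha0 :: "letter list \<Rightarrow> real \<Rightarrow> complex" where
  "alpha0 [] z = 1"
| "alpha0 (y # w) z = (LINT u:{0<..<z}|lborel. omega y u * alpha0 w u)"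

definition colored_word :: "nat list \<Rightarrow> complex list \<Rightarrow> real list \<Rightarrow> letter list" where
  "colored_word s xi t =
     concat (map (\<lambda>i. replicate (s!i - 1) X0 @ [XL (Suc i) xi (tbar t i)]) [0..<length s])"

end

theory Submission
  imports Defs "HOL-Real_Asymp.Real_Asymp"
begin

text \<open>
  Reading the blocks from the right, the iterated integral of a word w on ]0,1[ has the form
  u^(-t) Sum_n c(n) u^n (a "series representation" of w).  Prepending x0 divides c(n) by n - t;
  prepending a colored letter with parameter P = xi_1...xi_k multiplies by the geometric
  series of P u (a convolution of c with the powers of P) and shifts t by tbar_k.  Each step
  is a termwise integration of v powr (-1-t) times an absolutely convergent power series.
\<close>

section \<open>Integrating power series against v powr (-1 - t)\<close>

lemma set_integral_powr_Ioo:
  fixes e u :: real assumes e: "e > -1" and u: "u > 0"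
  shows "set_integrable lborel {0<..<u} (\<lambda>v. v powr e)"
    and "(LINT v:{0<..<u}|lborel. v powr e) = u powr (e+1) / (e+1)"
proof -
  define F where "F = (\<lambda>x::real. x powr (e+1) / (e+1))"
  have deriv: "DERIV F x :> x powr e" if "0 < x" for x
  proof -
    have "DERIV (\<lambda>x. x powr (e+1)) x :> (e+1) * x powr (e+1-1)"
      using that by (rule has_real_derivative_powr)
    then have "DERIV F x :> (e+1) * x powr (e+1-1) / (e+1)"
      unfolding F_def by (rule DERIV_cdivide)
    then show ?thesis using e by simp
  qed
  have lim0: "(F \<longlongrightarrow> 0) (at_right 0)"
  proof -
    have "((\<lambda>x::real. x powr (e+1)) \<longlongrightarrow> 0) (at_right 0)"
      using e by real_asymp
    then show ?thesis unfolding F_def by (rule tendsto_divide_zero)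
  qed
  have limu: "(F \<longlongrightarrow> F u) (at_left u)"
    unfolding F_def using u e by (intro tendsto_intros) auto
  have FTC: "set_integrable lborel (einterval (ereal 0) (ereal u)) (\<lambda>v. v powr e)"
       "(LBINT x=ereal 0..ereal u. x powr e) = F u - 0"
    by (rule interval_integral_FTC_nonneg[where F=F and A=0 and B="F u"];
        use u deriv lim0 limu in \<open>auto simp: ereal_tendsto_simps1 intro!: continuous_intros\<close>)+
  show "set_integrable lborel {0<..<u} (\<lambda>v. v powr e)" using FTC(1) by simp
  show "(LINT v:{0<..<u}|lborel. v powr e) = u powr (e+1) / (e+1)"
    using FTC(2) u by (simp add: interval_lebesgue_integral_def F_def)
qed

text \<open>Dividing the coefficient of index n by n - t: with t < 1 and a vanishing constant term
  all the divisors are positive, so norms pass through the division.\<close>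
lemma norm_div_shift:
  fixes c :: "nat \<Rightarrow> complex"
  assumes c0: "c 0 = 0" and t: "t < 1"
  shows "norm (c n / complex_of_real (real n - t) ^ k) = norm (c n) / (real n - t) ^ k"
proof (cases "n = 0")
  case True then show ?thesis by (simp add: c0)
next
  case False
  then have "real n - t > 0" using t by simp
  then have "norm (complex_of_real (real n - t)) = real n - t" by (metis norm_of_real abs_of_pos)
  then show ?thesis by (simp add: norm_divide norm_power del: of_real_diff)
qed

lemma summable_div_shift:
  fixes c :: "nat \<Rightarrow> complex"
  assumes c0: "c 0 = 0" and t: "t < 1" and v: "0 \<le> v"
    and sum: "summable (\<lambda>n. norm (c n) * v ^ n)"
  shows "summable (\<lambda>n. norm (c n) / (real n - t) ^ k * v ^ n)"
proof (rule summable_comparison_test[where g = "\<lambda>n. norm (c n) * v ^ n / (1 - t) ^ k"])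
  show "summable (\<lambda>n. norm (c n) * v ^ n / (1 - t) ^ k)" by (rule summable_divide[OF sum])
  show "\<exists>N. \<forall>n\<ge>N. norm (norm (c n) / (real n - t) ^ k * v ^ n) \<le> norm (c n) * v ^ n / (1 - t) ^ k"
  proof (intro exI allI impI)
    fix n :: nat assume "1 \<le> n"
    then have pos: "1 - t \<le> real n - t" "0 < 1 - t" using t by auto
    have nn: "0 \<le> norm (c n) * v ^ n" using v by simp
    have "norm (norm (c n) / (real n - t) ^ k * v ^ n) = norm (c n) * v ^ n / (real n - t) ^ k"
      using pos v by simp
    also have "\<dots> \<le> norm (c n) * v ^ n / (1 - t) ^ k"
      using pos nn by (intro divide_left_mono power_mono mult_pos_pos zero_less_power) auto
    finally show "norm (norm (c n) / (real n - t) ^ k * v ^ n) \<le> norm (c n) * v ^ n / (1 - t) ^ k" .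
  qed
qed

definition monomial_on :: "real \<Rightarrow> real \<Rightarrow> nat \<Rightarrow> real \<Rightarrow> real" where
  "monomial_on u t n v = indicator {0<..<u} v * v powr (real n - 1 - t)"

lemma monomial_on_nonneg: "0 \<le> monomial_on u t n v"
  by (simp add: monomial_on_def indicator_def)

lemma monomial_on_inside:
  assumes "0 < v" "v < u"
  shows "monomial_on u t n v = v powr (-1-t) * v ^ n"
proof -
  have e: "real n - 1 - t = (-1-t) + real n" by simp
  show ?thesis using assms unfolding monomial_on_def e by (simp add: powr_add powr_realpow)
qed

lemma monomial_on_outside: "\<not> (0 < v \<and> v < u) \<Longrightarrow> monomial_on u t n v = 0"
  by (simp add: monomial_on_def)

lemma integral_monomial_on:
  assumes n: "n \<noteq> 0" and t: "t < 1" and u: "0 < u"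
  shows "integrable lborel (monomial_on u t n)"
    and "integral\<^sup>L lborel (monomial_on u t n) = u powr (-t) * u ^ n / (real n - t)"
proof -
  have e: "real n - 1 - t > -1" using n t by simp
  note I = set_integral_powr_Ioo[OF e u, unfolded set_integrable_def set_lebesgue_integral_def]
  show "integrable lborel (monomial_on u t n)"
    using I(1) by (simp add: monomial_on_def[abs_def])
  have "u powr (real n - t) = u powr (-t) * u ^ n"
    using u by (simp add: powr_realpow[symmetric] powr_add[symmetric])
  then show "integral\<^sup>L lborel (monomial_on u t n) = u powr (-t) * u ^ n / (real n - t)"
    using I(2) by (simp add: monomial_on_def[abs_def])
qed

text \<open>The terms of the integrated series, with their integrals and the integrals of their norms
  (the constant term vanishes, so n = 0 does not need integrability).\<close>
lemma integral_series_term: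
  fixes c :: "nat \<Rightarrow> complex"
  assumes c0: "c 0 = 0" and t: "t < 1" and u: "0 < u"
  shows "integrable lborel (\<lambda>v. c n * complex_of_real (monomial_on u t n v))"
    and "(\<integral>v. c n * complex_of_real (monomial_on u t n v) \<partial>lborel)
      = complex_of_real (u powr (-t)) * (c n / complex_of_real (real n - t) * complex_of_real u ^ n)"
    and "(\<integral>v. norm (c n * complex_of_real (monomial_on u t n v)) \<partial>lborel)
      = u powr (-t) * (norm (c n) / (real n - t) * u ^ n)"
proof -
  have norm_term: "norm (c n * complex_of_real (monomial_on u t n v)) = norm (c n) * monomial_on u t n v" for v
    using monomial_on_nonneg by (simp add: norm_mult)
  show "integrable lborel (\<lambda>v. c n * complex_of_real (monomial_on u t n v))"
  proof (cases "n = 0")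
    case False
    then show ?thesis using integral_monomial_on(1)[OF False t u]
      by (intro integrable_mult_right) (simp add: complex_of_real_integrable_eq)
  qed (simp add: c0)
  show "(\<integral>v. c n * complex_of_real (monomial_on u t n v) \<partial>lborel)
      = complex_of_real (u powr (-t)) * (c n / complex_of_real (real n - t) * complex_of_real u ^ n)"
  proof (cases "n = 0")
    case False
    have "(\<integral>v. c n * complex_of_real (monomial_on u t n v) \<partial>lborel)
        = c n * complex_of_real (u powr (-t) * u ^ n / (real n - t))"
      unfolding integral_monomial_on(2)[OF False t u, symmetric]
      by (simp only: integral_mult_right_zero integral_complex_of_real)
    then show ?thesis by (simp del: of_real_diff)
  qed (simp add: c0)
  show "(\<integral>v. norm (c n * complex_of_real (monomial_on u t n v)) \<partial>lborel)
      = u powr (-t) * (norm (c n) / (real n - t) * u ^ n)"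
  proof (cases "n = 0")
    case False
    have "(\<integral>v. norm (c n * complex_of_real (monomial_on u t n v)) \<partial>lborel)
        = norm (c n) * (u powr (-t) * u ^ n / (real n - t))"
      unfolding norm_term integral_monomial_on(2)[OF False t u, symmetric]
      by (rule integral_mult_right_zero)
    then show ?thesis by simp
  qed (simp add: c0)
qed

lemma series_times_powr_eq_sum:
  fixes c :: "nat \<Rightarrow> complex"
  assumes sum_v: "\<And>v. 0 < v \<Longrightarrow> v < u \<Longrightarrow> summable (\<lambda>n. norm (c n) * v ^ n)"
  shows "summable (\<lambda>n. norm (c n * complex_of_real (monomial_on u t n v)))"
    and "indicator {0<..<u} v *\<^sub>R (complex_of_real (v powr (-1-t)) * (\<Sum>n. c n * complex_of_real v ^ n))
      = (\<Sum>n. c n * complex_of_real (monomial_on u t n v))"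
proof -
  show "summable (\<lambda>n. norm (c n * complex_of_real (monomial_on u t n v)))"
  proof (cases "0 < v \<and> v < u")
    case True
    then have "summable (\<lambda>n. v powr (-1-t) * (norm (c n) * v ^ n))"
      by (intro summable_mult sum_v) auto
    then show ?thesis using True by (simp add: norm_mult norm_power monomial_on_inside mult_ac)
  qed (simp add: monomial_on_outside)
  show "indicator {0<..<u} v *\<^sub>R (complex_of_real (v powr (-1-t)) * (\<Sum>n. c n * complex_of_real v ^ n))
      = (\<Sum>n. c n * complex_of_real (monomial_on u t n v))"
  proof (cases "0 < v \<and> v < u")
    case True
    have "summable (\<lambda>n. norm (c n * complex_of_real v ^ n))"
      using sum_v[of v] True by (simp add: norm_mult norm_power)
    then have sum_eq: "(\<Sum>n. complex_of_real (v powr (-1-t)) * (c n * complex_of_real v ^ n))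
        = complex_of_real (v powr (-1-t)) * (\<Sum>n. c n * complex_of_real v ^ n)"
      by (rule suminf_mult[OF summable_norm_cancel])
    have terms: "(\<lambda>n. c n * complex_of_real (monomial_on u t n v))
        = (\<lambda>n. complex_of_real (v powr (-1-t)) * (c n * complex_of_real v ^ n))"
      using True by (intro ext) (simp add: monomial_on_inside mult.left_commute)
    show ?thesis using True unfolding terms sum_eq by simp
  qed (simp add: monomial_on_outside)
qed

lemma integral_powr_times_series:
  fixes c :: "nat \<Rightarrow> complex" and t u :: real
  assumes c0: "c 0 = 0" and t: "t < 1" and u: "0 < u"
    and sum_u: "summable (\<lambda>n. norm (c n) / (real n - t) * u ^ n)"
    and sum_v: "\<And>v. 0 < v \<Longrightarrow> v < u \<Longrightarrow> summable (\<lambda>n. norm (c n) * v ^ n)"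
  shows "(LINT v:{0<..<u}|lborel. complex_of_real (v powr (-1-t)) * (\<Sum>n. c n * complex_of_real v ^ n))
     = complex_of_real (u powr (-t)) * (\<Sum>n. c n / complex_of_real (real n - t) * complex_of_real u ^ n)"
proof -
  define f where "f n v = c n * complex_of_real (monomial_on u t n v)" for n v
  note series_term = integral_series_term[where c=c, OF c0 t u, folded f_def]
  have integrals_summable: "summable (\<lambda>n. \<integral>v. norm (f n v) \<partial>lborel)"
    unfolding series_term(3) by (intro summable_mult sum_u)
  have "norm (c n / complex_of_real (real n - t) * complex_of_real u ^ n) = norm (c n) / (real n - t) * u ^ n" for n
    using norm_div_shift[where c=c, OF c0 t, of n 1] u unfolding norm_mult norm_power norm_of_real by simp
  then have sum_u_complex: "summable (\<lambda>n. c n / complex_of_real (real n - t) * complex_of_real u ^ n)"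
    using sum_u by (intro summable_norm_cancel[of "\<lambda>n. c n / complex_of_real (real n - t) * complex_of_real u ^ n"]) simp
  have "(LINT v:{0<..<u}|lborel. complex_of_real (v powr (-1-t)) * (\<Sum>n. c n * complex_of_real v ^ n))
      = (\<integral>v. (\<Sum>n. f n v) \<partial>lborel)"
  proof -
    have "indicator {0<..<u} v *\<^sub>R (complex_of_real (v powr (-1-t)) * (\<Sum>n. c n * complex_of_real v ^ n))
        = (\<Sum>n. f n v)" for v
      unfolding f_def by (rule series_times_powr_eq_sum(2)[where u=u]) (fact sum_v)
    then show ?thesis unfolding set_lebesgue_integral_def by simp
  qed
  also have "\<dots> = (\<Sum>n. integral\<^sup>L lborel (f n))"
  proof (rule integral_suminf[OF series_term(1) AE_I2 integrals_summable])
    show "summable (\<lambda>n. norm (f n v))" for v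
      unfolding f_def by (rule series_times_powr_eq_sum(1)[where u=u]) (fact sum_v)
  qed
  also have "\<dots> = complex_of_real (u powr (-t)) * (\<Sum>n. c n / complex_of_real (real n - t) * complex_of_real u ^ n)"
    unfolding series_term(2) by (rule suminf_mult[OF sum_u_complex])
  finally show ?thesis .
qed

text \<open>The coefficients of (Sum_{j>0} (P v)^j) * (Sum_m A(m) v^m): a truncated convolution of A
  with the powers of P.\<close>
definition geom_conv :: "complex \<Rightarrow> (nat \<Rightarrow> complex) \<Rightarrow> nat \<Rightarrow> complex" where
  "geom_conv P A n = (\<Sum>m<n. P ^ (n - m) * A m)"

lemma geom_conv_0 [simp]: "geom_conv P A 0 = 0"
  by (simp add: geom_conv_def)

lemma norm_geom_conv_le:
  assumes P: "norm P \<le> 1"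
  shows "norm (geom_conv P A n) \<le> (\<Sum>m<n. norm (A m))"
proof -
  have "norm (geom_conv P A n) \<le> (\<Sum>m<n. norm (P ^ (n - m) * A m))"
    unfolding geom_conv_def by (rule norm_sum)
  also have "\<dots> \<le> (\<Sum>m<n. norm (A m))"
  proof (rule sum_mono)
    fix m
    have "norm P ^ (n - m) \<le> 1" using P by (simp add: power_le_one)
    then show "norm (P ^ (n - m) * A m) \<le> norm (A m)"
      by (simp add: norm_mult norm_power mult_left_le_one_le)
  qed
  finally show ?thesis .
qed

text \<open>Absolute convergence of the convolution inside the unit disc, by comparison with the
  Cauchy product of Sum |A(m)| v^m and the geometric series.\<close>
lemma summable_geom_conv:
  assumes P: "norm P \<le> 1" and v: "0 \<le> v" "v < 1" and sA: "summable (\<lambda>m. norm (A m) * v ^ m)"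
  shows "summable (\<lambda>n. norm (geom_conv P A n) * v ^ n)"
proof -
  define a where "a m = norm (A m) * v ^ m" for m
  define b where "b j = v ^ j" for j
  have "summable (\<lambda>k. norm (a k))" using sA v by (simp add: a_def)
  moreover have "summable (\<lambda>k. norm (b k))" using v by (simp add: b_def summable_geometric)
  ultimately have cauchy: "summable (\<lambda>k. \<Sum>i\<le>k. a i * b (k - i))"
    by (rule summable_Cauchy_product)
  show ?thesis
  proof (rule summable_comparison_test[OF _ cauchy], intro exI allI impI)
    fix n :: nat
    have "norm (geom_conv P A n) * v ^ n \<le> (\<Sum>m<n. norm (A m)) * v ^ n"
      using v norm_geom_conv_le[OF P] by (intro mult_right_mono) auto
    also have "\<dots> = (\<Sum>m<n. a m * b (n - m))"
      unfolding sum_distrib_right a_def b_def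
      by (intro sum.cong) (auto simp: mult.assoc power_add[symmetric])
    also have "\<dots> \<le> (\<Sum>m\<le>n. a m * b (n - m))"
      using v by (intro sum_mono2) (auto simp: a_def b_def)
    finally show "norm (norm (geom_conv P A n) * v ^ n) \<le> (\<Sum>i\<le>n. a i * b (n - i))"
      using v by simp
  qed
qed

lemma geometric_sums_shifted:
  fixes z :: complex assumes "norm z < 1"
  shows "(\<lambda>j. if j = 0 then 0 else z ^ j) sums (z / (1 - z))"
proof -
  have "(\<lambda>j. z * z ^ j) sums (z * (1 / (1 - z)))"
    by (intro sums_mult geometric_sums assms)
  then have "(\<lambda>j. (\<lambda>j. if j = 0 then 0 else z ^ j) (Suc j)) sums (z / (1 - z))"
    by simp
  then show ?thesis by (subst (asm) sums_Suc_iff) simp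
qed

lemma series_times_geometric:
  fixes P z :: complex and A :: "nat \<Rightarrow> complex"
  assumes Pz: "norm (P * z) < 1" and sA: "summable (\<lambda>m. norm (A m * z ^ m))"
  shows "(\<Sum>m. A m * z ^ m) * (P * z / (1 - P * z)) = (\<Sum>n. geom_conv P A n * z ^ n)"
proof -
  define p where "p j = (if j = 0 then 0 else (P * z) ^ j)" for j
  have p_sums: "p sums (P * z / (1 - P * z))"
    unfolding p_def by (rule geometric_sums_shifted[OF Pz])
  have p_summable: "summable (\<lambda>j. norm (p j))"
  proof (rule summable_comparison_test[where g = "\<lambda>j. norm (P * z) ^ j"])
    show "\<exists>N. \<forall>n\<ge>N. norm (norm (p n)) \<le> norm (P * z) ^ n"
      by (auto simp: p_def norm_power)
    show "summable (\<lambda>j. norm (P * z) ^ j)" using Pz by (intro summable_geometric) simp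
  qed
  have coeff: "(\<Sum>i\<le>k. A i * z ^ i * p (k - i)) = geom_conv P A k * z ^ k" for k
  proof -
    have "(\<Sum>i\<le>k. A i * z ^ i * p (k - i)) = (\<Sum>i<k. A i * z ^ i * p (k - i))"
      by (simp add: lessThan_Suc_atMost[symmetric] p_def)
    also have "\<dots> = (\<Sum>m<k. P ^ (k - m) * A m * z ^ k)"
    proof (rule sum.cong)
      fix m assume "m \<in> {..<k}"
      then have "k - m \<noteq> 0" "z ^ m * z ^ (k - m) = z ^ k"
        by (auto simp: power_add[symmetric])
      then show "A m * z ^ m * p (k - m) = P ^ (k - m) * A m * z ^ k"
        unfolding p_def by (simp add: power_mult_distrib mult_ac)
    qed simp
    finally show ?thesis by (simp add: geom_conv_def sum_distrib_right)
  qed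
  have "(\<Sum>m. A m * z ^ m) * (\<Sum>j. p j) = (\<Sum>k. \<Sum>i\<le>k. A i * z ^ i * p (k - i))"
    by (rule Cauchy_product[OF sA p_summable])
  then show ?thesis using p_sums unfolding coeff by (simp add: sums_iff)
qed

lemma colored_form_times_series:
  fixes P :: complex and A :: "nat \<Rightarrow> complex" and v \<tau> t :: real
  assumes P: "norm P \<le> 1" and v: "0 < v" "v < 1"
    and sA: "summable (\<lambda>m. norm (A m) * v ^ m)"
  shows "P / (1 - P * complex_of_real v) * complex_of_real (1 / v powr \<tau>)
          * (complex_of_real (v powr (- t)) * (\<Sum>m. A m * complex_of_real v ^ m))
       = complex_of_real (v powr (-1 - (\<tau> + t))) * (\<Sum>n. geom_conv P A n * complex_of_real v ^ n)"
proof -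
  define z where "z = P * complex_of_real v"
  have "norm z \<le> 1 * v" using P v by (simp add: z_def norm_mult mult_right_mono)
  then have nz: "norm z < 1" using v by simp
  have "summable (\<lambda>m. norm (A m * complex_of_real v ^ m))"
    using sA v by (simp add: norm_mult norm_power)
  from series_times_geometric[OF nz[unfolded z_def] this]
  have product: "(\<Sum>m. A m * complex_of_real v ^ m) * (z / (1 - z)) = (\<Sum>n. geom_conv P A n * complex_of_real v ^ n)"
    by (simp add: z_def)
  have factor: "P / (1 - z) = complex_of_real (1 / v) * (z / (1 - z))"
    using v by (simp add: z_def field_simps)
  have powers: "complex_of_real (v powr (-1 - (\<tau> + t)))
      = complex_of_real (1 / v) * complex_of_real (1 / v powr \<tau>) * complex_of_real (v powr (- t))"
  proof -
    have e: "-1 - (\<tau> + t) = (-1) + (-\<tau>) + (-t)" by simp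
    have "v powr (-1 - (\<tau> + t)) = v powr (-1) * v powr (-\<tau>) * v powr (-t)"
      by (simp only: e powr_add)
    then show ?thesis using v by (simp add: powr_minus divide_inverse)
  qed
  show ?thesis
    unfolding powers product[symmetric] z_def[symmetric] factor by (simp add: mult_ac)
qed

section \<open>Iterated integrals of words as power series\<close>

fun letter_P :: "letter \<Rightarrow> complex" where
  "letter_P X0 = 0" | "letter_P (XL i xs \<tau>) = prod_list (take i xs)"
fun letter_tau :: "letter \<Rightarrow> real" where
  "letter_tau X0 = 0" | "letter_tau (XL i xs \<tau>) = \<tau>"
fun colored :: "letter \<Rightarrow> bool" where
  "colored X0 = False" | "colored (XL i xs \<tau>) = True"

lemma omega_colored:
  "colored y \<Longrightarrow> omega y u = letter_P y / (1 - letter_P y * complex_of_real u) * complex_of_real (1 / u powr letter_tau y)"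
  by (cases y) auto

definition series_rep :: "letter list \<Rightarrow> real \<Rightarrow> (nat \<Rightarrow> complex) \<Rightarrow> bool" where
  "series_rep w t c \<longleftrightarrow>
     (\<forall>u. 0 < u \<and> u < 1 \<longrightarrow> alpha0 w u = complex_of_real (u powr (-t)) * (\<Sum>n. c n * complex_of_real u ^ n))
     \<and> (\<forall>v. 0 \<le> v \<and> v < 1 \<longrightarrow> summable (\<lambda>n. norm (c n) * v ^ n))"

lemma series_repD:
  assumes "series_rep w t c"
  shows "\<And>u. 0 < u \<Longrightarrow> u < 1 \<Longrightarrow> alpha0 w u = complex_of_real (u powr (-t)) * (\<Sum>n. c n * complex_of_real u ^ n)"
    and "\<And>v. 0 \<le> v \<Longrightarrow> v < 1 \<Longrightarrow> summable (\<lambda>n. norm (c n) * v ^ n)"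
  using assms unfolding series_rep_def by blast+

lemma alpha0_Cons_eval:
  assumes c0: "c 0 = 0" and t: "t < 1"
    and integrand: "\<And>v. 0 < v \<Longrightarrow> v < 1 \<Longrightarrow>
      omega y v * alpha0 w v = complex_of_real (v powr (-1-t)) * (\<Sum>n. c n * complex_of_real v ^ n)"
    and sum: "\<And>v. 0 \<le> v \<Longrightarrow> v < 1 \<Longrightarrow> summable (\<lambda>n. norm (c n) * v ^ n)"
    and u: "0 < u" "u \<le> 1" and sum_u: "summable (\<lambda>n. norm (c n) / (real n - t) * u ^ n)"
  shows "alpha0 (y # w) u = complex_of_real (u powr (-t)) * (\<Sum>n. c n / complex_of_real (real n - t) * complex_of_real u ^ n)"
proof -
  have "alpha0 (y # w) u = (LINT v:{0<..<u}|lborel. omega y v * alpha0 w v)" by simp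
  also have "\<dots> = (LINT v:{0<..<u}|lborel. complex_of_real (v powr (-1-t)) * (\<Sum>n. c n * complex_of_real v ^ n))"
    by (rule set_lebesgue_integral_cong) (use u integrand in auto)
  also have "\<dots> = complex_of_real (u powr (-t)) * (\<Sum>n. c n / complex_of_real (real n - t) * complex_of_real u ^ n)"
    by (rule integral_powr_times_series[OF c0 t u(1) sum_u]) (use u sum in auto)
  finally show ?thesis .
qed

lemma series_rep_Cons:
  assumes c0: "c 0 = 0" and t: "t < 1"
    and integrand: "\<And>v. 0 < v \<Longrightarrow> v < 1 \<Longrightarrow>
      omega y v * alpha0 w v = complex_of_real (v powr (-1-t)) * (\<Sum>n. c n * complex_of_real v ^ n)"
    and sum: "\<And>v. 0 \<le> v \<Longrightarrow> v < 1 \<Longrightarrow> summable (\<lambda>n. norm (c n) * v ^ n)"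
  shows "series_rep (y # w) t (\<lambda>n. c n / complex_of_real (real n - t))"
proof -
  have sum_div: "summable (\<lambda>n. norm (c n / complex_of_real (real n - t)) * v ^ n)"
    if "0 \<le> v" "v < 1" for v
    using summable_div_shift[OF c0 t that(1) sum[OF that], of 1] norm_div_shift[where c=c, OF c0 t, of _ 1]
    by simp
  show ?thesis unfolding series_rep_def
  proof (intro conjI allI impI)
    fix u :: real assume u: "0 < u \<and> u < 1"
    then have "summable (\<lambda>n. norm (c n) / (real n - t) * u ^ n)"
      using summable_div_shift[OF c0 t _ sum, of u 1] by simp
    then show "alpha0 (y # w) u = complex_of_real (u powr (-t)) * (\<Sum>n. c n / complex_of_real (real n - t) * complex_of_real u ^ n)"
      using u by (intro alpha0_Cons_eval[OF c0 t integrand sum]) auto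
  qed (use sum_div in auto)
qed

lemma X0_integrand:
  assumes "series_rep w t c" and "0 < v" "v < 1"
  shows "omega X0 v * alpha0 w v = complex_of_real (v powr (-1-t)) * (\<Sum>n. c n * complex_of_real v ^ n)"
proof -
  have "v powr (-1-t) = 1 / v * v powr (-t)"
    using \<open>0 < v\<close> by (simp add: powr_diff powr_minus divide_inverse)
  then show ?thesis using series_repD(1)[OF assms] by simp
qed

lemma series_rep_X0:
  assumes rep: "series_rep w t c" and c0: "c 0 = 0" and t: "t < 1"
  shows "series_rep (X0 # w) t (\<lambda>n. c n / complex_of_real (real n - t))"
  by (rule series_rep_Cons[OF c0 t X0_integrand[OF rep] series_repD(2)[OF rep]])

lemma series_rep_X0_power:
  assumes rep: "series_rep w t c" and c0: "c 0 = 0" and t: "t < 1"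
  shows "series_rep (replicate k X0 @ w) t (\<lambda>n. c n / complex_of_real (real n - t) ^ k)"
proof (induction k)
  case 0
  then show ?case using rep by simp
next
  case (Suc k)
  have "series_rep (X0 # replicate k X0 @ w) t
      (\<lambda>n. c n / complex_of_real (real n - t) ^ k / complex_of_real (real n - t))"
    by (rule series_rep_X0[OF Suc _ t]) (simp add: c0)
  then show ?case by (simp add: divide_divide_eq_left mult.commute)
qed

lemma series_rep_colored:
  assumes rep: "series_rep w t' A" and y: "colored y" "norm (letter_P y) \<le> 1"
    and t: "letter_tau y + t' < 1"
  shows "series_rep (y # w) (letter_tau y + t')
      (\<lambda>n. geom_conv (letter_P y) A n / complex_of_real (real n - (letter_tau y + t')))"
proof (rule series_rep_Cons[where c="geom_conv (letter_P y) A", OF geom_conv_0 t])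
  fix v :: real assume v: "0 < v" "v < 1"
  show "omega y v * alpha0 w v = complex_of_real (v powr (-1 - (letter_tau y + t')))
      * (\<Sum>n. geom_conv (letter_P y) A n * complex_of_real v ^ n)"
    using colored_form_times_series[OF y(2) v series_repD(2)[OF rep]] v
    by (simp add: omega_colored[OF y(1)] series_repD(1)[OF rep])
next
  fix v :: real assume "0 \<le> v" "v < 1"
  then show "summable (\<lambda>n. norm (geom_conv (letter_P y) A n) * v ^ n)"
    by (intro summable_geom_conv[OF y(2)] series_repD(2)[OF rep])
qed


text \<open>The exponent of a block list is the sum of the tau's of its letters, and its coefficients
  are given by the recursion that the integration steps produce.\<close>
fun blocks_word :: "(nat \<times> letter) list \<Rightarrow> letter list" where
  "blocks_word [] = []"
| "blocks_word (p # L) = replicate (fst p - 1) X0 @ snd p # blocks_word L"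

definition blocks_tau :: "(nat \<times> letter) list \<Rightarrow> real" where
  "blocks_tau L = sum_list (map (\<lambda>p. letter_tau (snd p)) L)"

lemma blocks_tau_simps [simp]:
  "blocks_tau [] = 0" "blocks_tau (p # L) = letter_tau (snd p) + blocks_tau L"
  by (simp_all add: blocks_tau_def)

fun coeff :: "(nat \<times> letter) list \<Rightarrow> nat \<Rightarrow> complex" where
  "coeff [] n = (if n = 0 then 1 else 0)"
| "coeff (p # L) n = geom_conv (letter_P (snd p)) (coeff L) n / complex_of_real (real n - blocks_tau (p # L)) ^ fst p"

text \<open>The hypotheses under which the representation holds: every block has a colored letter
  with |P| \<le> 1 and s \<ge> 1, and every tail exponent is < 1 (this is condition (E)).\<close>
fun admissible :: "(nat \<times> letter) list \<Rightarrow> bool" where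
  "admissible [] = True"
| "admissible (p # L) \<longleftrightarrow> fst p \<ge> 1 \<and> colored (snd p) \<and> norm (letter_P (snd p)) \<le> 1
      \<and> blocks_tau (p # L) < 1 \<and> admissible L"

lemma series_rep_block:
  assumes adm: "admissible (p # L)" and rep: "series_rep (blocks_word L) (blocks_tau L) (coeff L)"
  shows "series_rep (replicate k X0 @ snd p # blocks_word L) (blocks_tau (p # L))
     (\<lambda>n. geom_conv (letter_P (snd p)) (coeff L) n / complex_of_real (real n - blocks_tau (p # L)) ^ Suc k)"
proof -
  have t: "blocks_tau (p # L) < 1" using adm by simp
  have "series_rep (snd p # blocks_word L) (blocks_tau (p # L))
      (\<lambda>n. geom_conv (letter_P (snd p)) (coeff L) n / complex_of_real (real n - blocks_tau (p # L)))"
    using series_rep_colored[OF rep, of "snd p"] adm by simp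
  from series_rep_X0_power[OF this _ t, of k] show ?thesis
    by (simp add: divide_divide_eq_left)
qed

lemma series_rep_blocks:
  "admissible L \<Longrightarrow> series_rep (blocks_word L) (blocks_tau L) (coeff L)"
proof (induction L)
  case Nil
  have "(\<lambda>n. coeff [] n * z ^ n) = (\<lambda>n. if n = 0 then 1 else 0)" for z :: complex
    by auto
  moreover have "(\<lambda>n. norm (coeff [] n) * v ^ n) = (\<lambda>n. if n = 0 then 1 else 0)" for v :: real
    by auto
  ultimately show ?case unfolding series_rep_def
    using sums_single[of 0 "\<lambda>_. 1::complex"] sums_single[of 0 "\<lambda>_. 1::real"]
    by (auto simp: sums_iff)
next
  case (Cons p L)
  then have "series_rep (replicate (fst p - 1) X0 @ snd p # blocks_word L) (blocks_tau (p # L))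
     (\<lambda>n. geom_conv (letter_P (snd p)) (coeff L) n / complex_of_real (real n - blocks_tau (p # L)) ^ Suc (fst p - 1))"
    by (intro series_rep_block) auto
  moreover have "Suc (fst p - 1) = fst p" using Cons.prems by simp
  ultimately show ?case by simp
qed

text \<open>At the end point u = 1: if the first block has s \<ge> 2, the outermost letter is x0 and the
  integral up to 1 is the sum of the coefficients, provided they are absolutely summable.\<close>
lemma alpha0_blocks_at_one:
  assumes adm: "admissible (p # L)" and s2: "2 \<le> fst p"
    and sum: "summable (\<lambda>n. norm (coeff (p # L) n))"
  shows "alpha0 (blocks_word (p # L)) 1 = (\<Sum>n. coeff (p # L) n)"
proof -
  define k where "k = fst p - 2"
  define t where "t = blocks_tau (p # L)"
  define C where "C n = geom_conv (letter_P (snd p)) (coeff L) n / complex_of_real (real n - t) ^ Suc k" for n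
  have t1: "t < 1" using adm by (simp add: t_def)
  have C0: "C 0 = 0" by (simp add: C_def)
  have rep: "series_rep (replicate k X0 @ snd p # blocks_word L) t C"
    unfolding C_def t_def using adm by (intro series_rep_block series_rep_blocks) auto
  have fst_p: "fst p = Suc (Suc k)" using s2 by (simp add: k_def)
  have word: "blocks_word (p # L) = X0 # (replicate k X0 @ snd p # blocks_word L)"
    using fst_p by simp
  have coeff_eq: "C n / complex_of_real (real n - t) = coeff (p # L) n" for n
    by (simp add: C_def t_def fst_p divide_divide_eq_left)
  have "norm (C n) / (real n - t) = norm (coeff (p # L) n)" for n
    using norm_div_shift[where c=C, OF C0 t1, of n 1] coeff_eq[of n] by simp
  then have sum1: "summable (\<lambda>n. norm (C n) / (real n - t) * 1 ^ n)"
    using sum by simp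
  have "alpha0 (blocks_word (p # L)) 1
      = complex_of_real (1 powr (-t)) * (\<Sum>n. C n / complex_of_real (real n - t) * complex_of_real 1 ^ n)"
    unfolding word
    by (rule alpha0_Cons_eval[OF C0 t1 X0_integrand[OF rep] series_repD(2)[OF rep] _ _ sum1]) auto
  also have "\<dots> = (\<Sum>n. coeff (p # L) n)"
    by (simp only: powr_one_eq_one of_real_1 power_one mult_1_right mult_1_left coeff_eq)
  finally show ?thesis .
qed

section \<open>Decay of the coefficients\<close>

lemma shifted_index_lower_bound:
  assumes t: "t < 1" and n: "1 \<le> n"
  shows "min 1 (1 - t) * real n \<le> real n - t"
proof (cases "t \<le> 0")
  case True then show ?thesis using n by (simp add: min_def)
next
  case False
  then have "min 1 (1 - t) = 1 - t" using t by (simp add: min_def)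
  moreover have "0 \<le> t * (real n - 1)" using False n by simp
  ultimately show ?thesis by (simp add: algebra_simps)
qed

lemma norm_geom_conv_weighted_le:
  assumes P: "norm P \<le> 1" and a: "0 \<le> a"
    and sum: "summable (\<lambda>m. norm (A m) * (real m + 1) powr (-a))"
  shows "norm (geom_conv P A n) \<le> real n powr a * (\<Sum>m. norm (A m) * (real m + 1) powr (-a))"
proof -
  have "norm (geom_conv P A n) \<le> (\<Sum>m<n. norm (A m))"
    by (rule norm_geom_conv_le[OF P])
  also have "\<dots> \<le> (\<Sum>m<n. real n powr a * (norm (A m) * (real m + 1) powr (-a)))"
  proof (rule sum_mono)
    fix m assume "m \<in> {..<n}"
    then have le: "(real m + 1) powr a \<le> real n powr a" using a by (intro powr_mono2) auto
    have "real n powr a * (real m + 1) powr (-a) = real n powr a / (real m + 1) powr a"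
      by (simp add: powr_minus divide_inverse)
    then have "1 \<le> real n powr a * (real m + 1) powr (-a)"
      using le by simp
    from mult_left_mono[OF this norm_ge_zero[of "A m"]]
    show "norm (A m) \<le> real n powr a * (norm (A m) * (real m + 1) powr (-a))"
      by (metis mult.left_commute mult.right_neutral)
  qed
  also have "\<dots> \<le> real n powr a * (\<Sum>m. norm (A m) * (real m + 1) powr (-a))"
    unfolding sum_distrib_left[symmetric] by (intro mult_left_mono sum_le_suminf sum) auto
  finally show ?thesis .
qed

lemma coeff_bound:
  assumes adm: "admissible (p # L)" and a: "0 \<le> a"
    and sum: "summable (\<lambda>n. norm (coeff L n) * (real n + 1) powr (-a))"
  obtains K where "0 \<le> K" "\<And>n. 1 \<le> n \<Longrightarrow> norm (coeff (p # L) n) \<le> K * real n powr (a - real (fst p))"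
proof -
  define S where "S = (\<Sum>n. norm (coeff L n) * (real n + 1) powr (-a))"
  define t where "t = blocks_tau (p # L)"
  define d where "d = min 1 (1 - t)"
  define s where "s = fst p"
  define P where "P = letter_P (snd p)"
  have t1: "t < 1" and P1: "norm P \<le> 1" using adm by (auto simp: t_def P_def)
  have d0: "0 < d" using t1 by (simp add: d_def)
  have S0: "0 \<le> S" unfolding S_def by (intro suminf_nonneg sum) simp
  have "norm (coeff (p # L) n) \<le> S / d ^ s * real n powr (a - real s)" if n1: "1 \<le> n" for n
  proof -
    have numerator: "norm (geom_conv P (coeff L) n) \<le> real n powr a * S"
      unfolding S_def by (rule norm_geom_conv_weighted_le[OF P1 a sum])
    have pos: "0 < real n - t" using n1 t1 by linarith
    then have "norm (complex_of_real (real n - t)) = real n - t" by (metis norm_of_real abs_of_pos)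
    then have "norm (coeff (p # L) n) = norm (geom_conv P (coeff L) n) / (real n - t) ^ s"
      by (simp add: P_def t_def s_def norm_divide norm_power del: of_real_diff blocks_tau_simps)
    also have "\<dots> \<le> real n powr a * S / (real n - t) ^ s"
      using numerator pos by (intro divide_right_mono) auto
    also have "\<dots> \<le> real n powr a * S / (d * real n) ^ s"
    proof -
      have "(d * real n) ^ s \<le> (real n - t) ^ s"
        using shifted_index_lower_bound[OF t1 n1] d0 by (intro power_mono) (auto simp: d_def)
      moreover have "0 < (d * real n) ^ s" using d0 n1 by simp
      ultimately show ?thesis using S0 by (intro divide_left_mono mult_nonneg_nonneg) auto
    qed
    also have "\<dots> = S / d ^ s * (real n powr a / real n ^ s)"
      using n1 d0 by (simp add: power_mult_distrib)
    also have "\<dots> = S / d ^ s * real n powr (a - real s)"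
      using n1 by (simp add: powr_diff powr_realpow)
    finally show ?thesis .
  qed
  then show ?thesis using that[of "S / d ^ s"] S0 d0 by (simp add: s_def)
qed

text \<open>Each block improves the decay by at least n^(-1); so with any e > 0 the coefficients of
  L are summable against the weight (n+1)^(-|L| e).\<close>
lemma coeff_weighted_summable:
  "admissible L \<Longrightarrow> 0 < e \<Longrightarrow> summable (\<lambda>n. norm (coeff L n) * (real n + 1) powr (- (real (length L) * e)))"
proof (induction L)
  case Nil
  have "(\<lambda>n. norm (coeff [] n) * (real n + 1) powr (- (real (length []) * e))) = (\<lambda>n. if n = 0 then 1 else 0)"
    by auto
  then show ?case using sums_single[of 0 "\<lambda>_. 1::real"] by (simp add: sums_summable)
next
  case (Cons p L)
  define a where "a = real (length L) * e"
  have a0: "0 \<le> a" using Cons.prems by (simp add: a_def)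
  obtain K where K0: "0 \<le> K" and K: "\<And>n. 1 \<le> n \<Longrightarrow> norm (coeff (p # L) n) \<le> K * real n powr (a - real (fst p))"
    using coeff_bound[OF Cons.prems(1) a0] Cons by (auto simp: a_def)
  have s1: "1 \<le> fst p" using Cons.prems by simp
  have le: "norm (coeff (p # L) n) * (real n + 1) powr (- (real (length (p # L)) * e)) \<le> K * real n powr (-1 - e)" for n
  proof (cases "n = 0")
    case False
    then have n1: "1 \<le> n" by simp
    have "(real n + 1) powr (-(a+e)) \<le> real n powr (-(a+e))"
      using n1 a0 Cons.prems(2) by (intro powr_mono2') auto
    then have "norm (coeff (p # L) n) * (real n + 1) powr (-(a+e)) \<le> K * real n powr (a - real (fst p)) * real n powr (-(a+e))"
      using K[OF n1] K0 by (intro mult_mono) auto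
    also have "\<dots> = K * real n powr (- real (fst p) - e)"
      by (simp add: powr_add[symmetric])
    also have "\<dots> \<le> K * real n powr (-1 - e)"
      using n1 s1 K0 by (intro mult_left_mono powr_mono) auto
    finally show ?thesis by (simp add: a_def algebra_simps)
  qed simp
  have "summable (\<lambda>n. K * real n powr (-1 - e))"
    using Cons.prems(2) by (intro summable_mult) (simp add: summable_real_powr_iff)
  then show ?case
    by (rule summable_comparison_test[rotated]) (use le in auto)
qed

lemma coeff_summable:
  assumes adm: "admissible (p # L)" and s2: "2 \<le> fst p"
  shows "summable (\<lambda>n. norm (coeff (p # L) n))"
proof -
  define e where "e = 1 / (real (length L) + 1)"
  define a where "a = real (length L) * e"
  have e0: "0 < e" and a0: "0 \<le> a" and a1: "a < 1" by (auto simp: a_def e_def field_simps)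
  have "summable (\<lambda>n. norm (coeff L n) * (real n + 1) powr (-a))"
    using coeff_weighted_summable[of L e] adm e0 by (simp add: a_def)
  then obtain K where K0: "0 \<le> K" and K: "\<And>n. 1 \<le> n \<Longrightarrow> norm (coeff (p # L) n) \<le> K * real n powr (a - real (fst p))"
    using coeff_bound[OF adm a0] by blast
  have le: "norm (coeff (p # L) n) \<le> K * real n powr (a - 2)" for n
  proof (cases "n = 0")
    case False
    then have n1: "1 \<le> n" by simp
    have "norm (coeff (p # L) n) \<le> K * real n powr (a - real (fst p))" by (rule K[OF n1])
    also have "\<dots> \<le> K * real n powr (a - 2)"
      using n1 s2 K0 by (intro mult_left_mono powr_mono) auto
    finally show ?thesis .
  qed simp
  have "summable (\<lambda>n. K * real n powr (a - 2))"
    using a1 by (intro summable_mult) (simp add: summable_real_powr_iff)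
  then show ?thesis
    by (rule summable_comparison_test[rotated]) (use le in auto)
qed


section \<open>Expanding the coefficients over decreasing tuples\<close>

definition head0 :: "nat list \<Rightarrow> nat" where
  "head0 ns = (case ns of [] \<Rightarrow> 0 | n # _ \<Rightarrow> n)"

lemma head0_simps [simp]: "head0 [] = 0" "head0 (n # ns) = n"
  by (simp_all add: head0_def)

definition decreasing_tuples :: "nat \<Rightarrow> nat list set" where
  "decreasing_tuples k = {ns. length ns = k \<and> sorted_wrt (>) ns \<and> (\<forall>n\<in>set ns. 0 < n)}"

definition tuples_from :: "nat \<Rightarrow> nat \<Rightarrow> nat list set" where
  "tuples_from k n = {ns \<in> decreasing_tuples k. head0 ns = n}"

lemma tuples_from_subset: "ns \<in> tuples_from k n \<Longrightarrow> set ns \<subseteq> {..n}"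
  by (cases ns) (auto simp: tuples_from_def decreasing_tuples_def less_imp_le)

lemma finite_tuples_from: "finite (tuples_from k n)"
proof (rule finite_subset)
  show "tuples_from k n \<subseteq> {ns. set ns \<subseteq> {..n} \<and> length ns = k}"
    using tuples_from_subset by (auto simp: tuples_from_def decreasing_tuples_def)
  show "finite {ns. set ns \<subseteq> {..n} \<and> length ns = k}"
    by (rule finite_lists_length_eq) simp
qed

lemma tuples_from_0: "tuples_from 0 n = (if n = 0 then {[]} else {})"
  by (auto simp: tuples_from_def decreasing_tuples_def)

lemma tuples_from_Suc_0: "tuples_from (Suc k) 0 = {}"
  by (auto simp: tuples_from_def decreasing_tuples_def length_Suc_conv)

lemma tuples_from_Suc:
  assumes "0 < n"
  shows "tuples_from (Suc k) n = (Cons n) ` (\<Union>m<n. tuples_from k m)"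
proof
  show "tuples_from (Suc k) n \<subseteq> (Cons n) ` (\<Union>m<n. tuples_from k m)"
  proof
    fix ns assume ns: "ns \<in> tuples_from (Suc k) n"
    then obtain xs where ns_eq: "ns = n # xs"
      by (cases ns) (auto simp: tuples_from_def decreasing_tuples_def)
    have xs: "xs \<in> decreasing_tuples k" and below: "\<forall>y\<in>set xs. y < n"
      using ns ns_eq by (auto simp: tuples_from_def decreasing_tuples_def)
    have "head0 xs < n"
      using below assms by (cases xs) auto
    then show "ns \<in> (Cons n) ` (\<Union>m<n. tuples_from k m)"
      using xs ns_eq by (auto simp: tuples_from_def)
  qed
next
  show "(Cons n) ` (\<Union>m<n. tuples_from k m) \<subseteq> tuples_from (Suc k) n"
  proof
    fix ns assume "ns \<in> (Cons n) ` (\<Union>m<n. tuples_from k m)"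
    then obtain m xs where m: "m < n" and xs: "xs \<in> tuples_from k m" and ns_eq: "ns = n # xs"
      by blast
    have "\<forall>y\<in>set xs. y < n" using tuples_from_subset[OF xs] m by auto
    then show "ns \<in> tuples_from (Suc k) n"
      using xs ns_eq assms by (auto simp: tuples_from_def decreasing_tuples_def)
  qed
qed

text \<open>The contribution of one tuple (n_1, ..., n_k) to the coefficient of index n_1.\<close>
fun block_term :: "(nat \<times> letter) list \<Rightarrow> nat list \<Rightarrow> complex" where
  "block_term [] [] = 1"
| "block_term (p # L) (n # ns) = letter_P (snd p) ^ (n - head0 ns)
     / complex_of_real (real n - blocks_tau (p # L)) ^ fst p * block_term L ns"
| "block_term _ _ = 0"

lemma coeff_expansion: "coeff L n = (\<Sum>ns\<in>tuples_from (length L) n. block_term L ns)"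
proof (induction L arbitrary: n)
  case Nil
  then show ?case by (simp add: tuples_from_0)
next
  case (Cons p L)
  show ?case
  proof (cases "n = 0")
    case True
    then show ?thesis by (simp add: tuples_from_Suc_0)
  next
    case False
    define D where "D = complex_of_real (real n - blocks_tau (p # L)) ^ fst p"
    have "(\<Sum>ns\<in>tuples_from (length (p # L)) n. block_term (p # L) ns)
        = (\<Sum>ns\<in>(\<Union>m<n. tuples_from (length L) m). block_term (p # L) (n # ns))"
      using False by (simp add: tuples_from_Suc sum.reindex inj_on_def)
    also have "\<dots> = (\<Sum>m<n. \<Sum>ns\<in>tuples_from (length L) m. block_term (p # L) (n # ns))"
      by (rule sum.UNION_disjoint) (auto simp: finite_tuples_from[unfolded tuples_from_def] tuples_from_def)
    also have "\<dots> = (\<Sum>m<n. letter_P (snd p) ^ (n - m) / D * coeff L m)"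
    proof (rule sum.cong)
      fix m assume "m \<in> {..<n}"
      have "(\<Sum>ns\<in>tuples_from (length L) m. block_term (p # L) (n # ns))
          = (\<Sum>ns\<in>tuples_from (length L) m. letter_P (snd p) ^ (n - m) / D * block_term L ns)"
        by (rule sum.cong) (auto simp: tuples_from_def D_def)
      then show "(\<Sum>ns\<in>tuples_from (length L) m. block_term (p # L) (n # ns))
          = letter_P (snd p) ^ (n - m) / D * coeff L m"
        by (simp add: Cons.IH sum_distrib_left)
    qed simp
    also have "\<dots> = coeff (p # L) n"
      by (simp add: D_def geom_conv_def sum_divide_distrib)
    finally show ?thesis ..
  qed
qed

text \<open>The majorant blocks: each colored letter is replaced by one with parameter |P|.  Its
  coefficients are the sums of the absolute values of the terms.\<close>
definition majorant :: "(nat \<times> letter) list \<Rightarrow> (nat \<times> letter) list" where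
  "majorant L = map (\<lambda>p. (fst p, XL 1 [complex_of_real (norm (letter_P (snd p)))] (letter_tau (snd p)))) L"

lemma majorant_simps [simp]:
  "majorant [] = []"
  "majorant (p # L) = (fst p, XL 1 [complex_of_real (norm (letter_P (snd p)))] (letter_tau (snd p))) # majorant L"
  by (simp_all add: majorant_def)

lemma length_majorant [simp]: "length (majorant L) = length L"
  by (simp add: majorant_def)

lemma blocks_tau_majorant [simp]: "blocks_tau (majorant L) = blocks_tau L"
  by (induction L) auto

lemma admissible_majorant: "admissible L \<Longrightarrow> admissible (majorant L)"
  by (induction L) auto

lemma block_term_majorant:
  "admissible L \<Longrightarrow> ns \<in> decreasing_tuples (length L) \<Longrightarrow>
    block_term (majorant L) ns = complex_of_real (norm (block_term L ns))"
proof (induction L arbitrary: ns)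
  case Nil
  then show ?case by (simp add: decreasing_tuples_def)
next
  case (Cons p L)
  obtain n xs where ns_eq: "ns = n # xs"
    using Cons.prems(2) by (cases ns) (auto simp: decreasing_tuples_def)
  have xs: "xs \<in> decreasing_tuples (length L)" and n: "0 < n"
    using Cons.prems(2) ns_eq by (auto simp: decreasing_tuples_def)
  have "0 < real n - blocks_tau (p # L)" using n Cons.prems(1) by simp
  then have "norm (complex_of_real (real n - blocks_tau (p # L))) = real n - blocks_tau (p # L)"
    by (metis norm_of_real abs_of_pos)
  then show ?case
    unfolding ns_eq using Cons.IH[OF _ xs] Cons.prems(1)
    by (simp add: norm_mult norm_divide norm_power del: of_real_diff)
qed

lemma norm_coeff_majorant:
  assumes "admissible L"
  shows "norm (coeff (majorant L) n) = (\<Sum>ns\<in>tuples_from (length L) n. norm (block_term L ns))"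
proof -
  have "coeff (majorant L) n = (\<Sum>ns\<in>tuples_from (length L) n. complex_of_real (norm (block_term L ns)))"
    unfolding coeff_expansion length_majorant
    by (rule sum.cong) (auto simp: tuples_from_def block_term_majorant[OF assms])
  also have "\<dots> = complex_of_real (\<Sum>ns\<in>tuples_from (length L) n. norm (block_term L ns))"
    by simp
  finally show ?thesis by (simp add: sum_nonneg del: of_real_sum)
qed

lemma infsum_decreasing_tuples:
  fixes g :: "nat list \<Rightarrow> complex"
  assumes sum: "summable (\<lambda>n. \<Sum>ns\<in>tuples_from k n. norm (g ns))"
  shows "infsum g (decreasing_tuples k) = (\<Sum>n. \<Sum>ns\<in>tuples_from k n. g ns)"
proof -
  have union: "decreasing_tuples k = (\<Union>n\<in>UNIV. tuples_from k n)"
    by (auto simp: tuples_from_def)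
  have "(\<lambda>ns. norm (g ns)) summable_on (\<Union>n\<in>UNIV. tuples_from k n)"
  proof (rule summable_on_UnionI[where g = "\<lambda>n. \<Sum>ns\<in>tuples_from k n. norm (g ns)"])
    show "((\<lambda>ns. norm (g ns)) has_sum (\<Sum>ns\<in>tuples_from k n. norm (g ns))) (tuples_from k n)" for n
      by (rule has_sum_finite[OF finite_tuples_from])
    show "(\<lambda>n. \<Sum>ns\<in>tuples_from k n. norm (g ns)) summable_on UNIV"
      using sum by (subst summable_on_UNIV_nonneg_real_iff) (auto intro: sum_nonneg)
    show "disjoint_family_on (tuples_from k) UNIV"
      by (auto simp: disjoint_family_on_def tuples_from_def)
  qed simp
  moreover have "snd ` Sigma UNIV (tuples_from k) = (\<Union>n\<in>UNIV. tuples_from k n)"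
    by force
  ultimately have "g summable_on (snd ` Sigma UNIV (tuples_from k))"
    by (simp add: abs_summable_summable)
  moreover have inj: "inj_on snd (Sigma UNIV (tuples_from k))"
    by (auto simp: inj_on_def tuples_from_def)
  ultimately have gs: "(g \<circ> snd) summable_on Sigma UNIV (tuples_from k)"
    using summable_on_reindex by blast
  have slices: "summable (\<lambda>n. norm (\<Sum>ns\<in>tuples_from k n. g ns))"
    by (rule summable_comparison_test[OF _ sum]) (auto intro: norm_sum)
  have "infsum g (decreasing_tuples k) = infsum g (snd ` Sigma UNIV (tuples_from k))"
    unfolding union by (rule arg_cong[where f = "infsum g"]) force
  also have "\<dots> = infsum (g \<circ> snd) (Sigma UNIV (tuples_from k))"
    by (rule infsum_reindex[OF inj])
  also have "\<dots> = infsum (\<lambda>n. \<Sum>ns\<in>tuples_from k n. g ns) UNIV"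
    using infsum_Sigma_banach[OF gs] by (simp add: finite_tuples_from)
  also have "\<dots> = (\<Sum>n. \<Sum>ns\<in>tuples_from k n. g ns)"
    by (rule infsumI[OF norm_summable_imp_has_sum[OF slices summable_sums[OF summable_norm_cancel[OF slices]]]])
  finally show ?thesis .
qed

theorem infsum_block_term_eq_alpha0:
  assumes adm: "admissible (p # L)" and s2: "2 \<le> fst p"
  shows "infsum (block_term (p # L)) (decreasing_tuples (length (p # L))) = alpha0 (blocks_word (p # L)) 1"
proof -
  define p' where "p' = (fst p, XL 1 [complex_of_real (norm (letter_P (snd p)))] (letter_tau (snd p)))"
  have "admissible (p' # majorant L)"
    using admissible_majorant[OF adm] by (simp add: p'_def)
  then have "summable (\<lambda>n. norm (coeff (p' # majorant L) n))"
    by (rule coeff_summable) (simp add: p'_def s2)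
  then have "summable (\<lambda>n. norm (coeff (majorant (p # L)) n))"
    by (simp add: p'_def)
  then have "summable (\<lambda>n. \<Sum>ns\<in>tuples_from (length (p # L)) n. norm (block_term (p # L) ns))"
    using norm_coeff_majorant[OF adm] by simp
  then have "infsum (block_term (p # L)) (decreasing_tuples (length (p # L))) = (\<Sum>n. coeff (p # L) n)"
    by (simp add: infsum_decreasing_tuples coeff_expansion)
  also have "\<dots> = alpha0 (blocks_word (p # L)) 1"
    by (rule alpha0_blocks_at_one[OF adm s2 coeff_summable[OF adm s2], symmetric])
  finally show ?thesis .
qed

section \<open>The colored polyzeta\<close>

definition colored_blocks :: "nat list \<Rightarrow> complex list \<Rightarrow> real list \<Rightarrow> (nat \<times> letter) list" where
  "colored_blocks s xi t = map (\<lambda>i. (s ! i, XL (Suc i) xi (tbar t i))) [0..<length s]"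

lemma blocks_word_map:
  "blocks_word (map (\<lambda>i. (a i, b i)) xs) = concat (map (\<lambda>i. replicate (a i - 1) X0 @ [b i]) xs)"
  by (induction xs) auto

lemma colored_word_eq_blocks_word: "colored_word s xi t = blocks_word (colored_blocks s xi t)"
  unfolding colored_word_def colored_blocks_def blocks_word_map ..

text \<open>The differences tbar telescope: the tail of the blocks from index i has exponent t_i.\<close>
lemma blocks_tau_colored_blocks:
  assumes "length t = length s" and "i < length s"
  shows "blocks_tau (drop i (colored_blocks s xi t)) = t ! i"
  using assms(2)
proof (induction "length s - i" arbitrary: i)
  case 0 then show ?case by simp
next
  case (Suc d)
  have drop_i: "drop i (colored_blocks s xi t)
      = (s ! i, XL (Suc i) xi (tbar t i)) # drop (Suc i) (colored_blocks s xi t)"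
    using Suc.prems by (simp add: colored_blocks_def drop_map upt_conv_Cons)
  show ?case
  proof (cases "Suc i < length s")
    case True
    then have "blocks_tau (drop (Suc i) (colored_blocks s xi t)) = t ! Suc i"
      using Suc.hyps by simp
    then show ?thesis unfolding drop_i using True assms(1) by (simp add: tbar_def)
  next
    case False
    then have "drop (Suc i) (colored_blocks s xi t) = []" by (simp add: colored_blocks_def)
    then show ?thesis unfolding drop_i using False assms(1) by (simp add: tbar_def)
  qed
qed

lemma admissible_iff:
  "admissible L \<longleftrightarrow> (\<forall>i<length L. fst (L ! i) \<ge> 1 \<and> colored (snd (L ! i))
     \<and> norm (letter_P (snd (L ! i))) \<le> 1 \<and> blocks_tau (drop i L) < 1)"
  by (induction L) (auto simp: All_less_Suc2)

lemma admissible_colored_blocks: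
  assumes ls: "length xi = length s" and lt: "length t = length s"
    and s1: "\<forall>k\<in>set s. k \<ge> 1" and E: "condE xi t"
  shows "admissible (colored_blocks s xi t)"
  unfolding admissible_iff
proof (intro allI impI)
  fix i assume "i < length (colored_blocks s xi t)"
  then have i: "i < length s" by (simp add: colored_blocks_def)
  have "norm (prod_list (take (Suc i) xi)) \<le> 1 \<and> t ! i < 1"
    using E i ls unfolding condE_def by (metis Suc_leI atLeastAtMost_iff diff_Suc_1 le_add1 plus_1_eq_Suc)
  then show "fst (colored_blocks s xi t ! i) \<ge> 1 \<and> colored (snd (colored_blocks s xi t ! i))
     \<and> norm (letter_P (snd (colored_blocks s xi t ! i))) \<le> 1 \<and> blocks_tau (drop i (colored_blocks s xi t)) < 1"
    using s1 i blocks_tau_colored_blocks[OF lt i] by (simp add: colored_blocks_def)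
qed

definition next_entry :: "nat list \<Rightarrow> nat \<Rightarrow> nat" where
  "next_entry ns i = (if Suc i < length ns then ns ! Suc i else 0)"

lemma block_term_prod:
  "length ns = length L \<Longrightarrow> block_term L ns = (\<Prod>i<length L. letter_P (snd (L ! i)) ^ (ns ! i - next_entry ns i)
      / complex_of_real (real (ns ! i) - blocks_tau (drop i L)) ^ fst (L ! i))"
proof (induction L arbitrary: ns)
  case Nil then show ?case by simp
next
  case (Cons p L)
  obtain n ns' where ns_eq: "ns = n # ns'" and len: "length ns' = length L"
    using Cons.prems by (cases ns) auto
  have next0: "next_entry (n # ns') 0 = head0 ns'" by (cases ns') (auto simp: next_entry_def)
  have next_Suc: "next_entry (n # ns') (Suc i) = next_entry ns' i" for i by (simp add: next_entry_def)
  show ?case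
    unfolding ns_eq
    by (simp only: length_Cons prod.lessThan_Suc_shift block_term.simps Cons.IH[OF len] next0 next_Suc
        nth_Cons_0 nth_Cons_Suc drop_0 drop_Suc_Cons)
qed

text \<open>For a decreasing tuple the powers of the partial products xi_1 ... xi_i with exponents
  n_i - n_(i+1) telescope to xi_1^(n_1) ... xi_r^(n_r).\<close>
lemma telescoping_powers:
  fixes xi :: "complex list" and ns :: "nat list"
  assumes len: "length ns = length xi" and sorted: "sorted_wrt (>) ns" and k: "k \<le> length xi"
  shows "(\<Prod>i<k. prod_list (take (Suc i) xi) ^ (ns ! i - next_entry ns i))
           * prod_list (take k xi) ^ (if k < length xi then ns ! k else 0)
       = (\<Prod>i<k. xi ! i ^ (ns ! i))"
  using k
proof (induction k)
  case 0 then show ?case by simp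
next
  case (Suc k)
  define Q where "Q = prod_list (take (Suc k) xi)"
  have k: "k < length xi" using Suc.prems by simp
  have le: "next_entry ns k \<le> ns ! k"
    using sorted_wrt_nth_less[OF sorted, of k "Suc k"] len by (auto simp: next_entry_def)
  have next_k: "(if Suc k < length xi then ns ! Suc k else 0) = next_entry ns k"
    using len by (simp add: next_entry_def)
  have Q_split: "Q = prod_list (take k xi) * xi ! k"
    using k by (simp add: Q_def take_Suc_conv_app_nth)
  have "(\<Prod>i<Suc k. prod_list (take (Suc i) xi) ^ (ns ! i - next_entry ns i))
         * Q ^ (if Suc k < length xi then ns ! Suc k else 0)
      = (\<Prod>i<k. prod_list (take (Suc i) xi) ^ (ns ! i - next_entry ns i))
         * (Q ^ (ns ! k - next_entry ns k) * Q ^ next_entry ns k)"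
    unfolding next_k by (simp add: Q_def mult.assoc)
  also have "Q ^ (ns ! k - next_entry ns k) * Q ^ next_entry ns k = Q ^ ns ! k"
    using le by (simp add: power_add[symmetric])
  also have "\<dots> = prod_list (take k xi) ^ (if k < length xi then ns ! k else 0) * xi ! k ^ ns ! k"
    using k by (simp add: Q_split power_mult_distrib)
  also have "(\<Prod>i<k. prod_list (take (Suc i) xi) ^ (ns ! i - next_entry ns i))
         * (prod_list (take k xi) ^ (if k < length xi then ns ! k else 0) * xi ! k ^ ns ! k)
      = (\<Prod>i<k. xi ! i ^ (ns ! i)) * xi ! k ^ ns ! k"
    using Suc.IH k by (simp add: mult.assoc[symmetric])
  finally show ?case by (simp add: Q_def)
qed

lemma Di_term_eq_block_term:
  assumes ls: "length xi = length s" and lt: "length t = length s"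
    and ns: "ns \<in> decreasing_tuples (length s)"
  shows "(\<Prod>i<length s. xi ! i ^ (ns ! i) / complex_of_real (real (ns ! i) - t ! i) ^ (s ! i))
       = block_term (colored_blocks s xi t) ns"
proof -
  define L where "L = colored_blocks s xi t"
  have len: "length ns = length s" and sorted: "sorted_wrt (>) ns"
    using ns by (auto simp: decreasing_tuples_def)
  have "block_term L ns = (\<Prod>i<length s. prod_list (take (Suc i) xi) ^ (ns ! i - next_entry ns i)
         / complex_of_real (real (ns ! i) - t ! i) ^ (s ! i))"
    using len blocks_tau_colored_blocks[OF lt, of _ xi]
    by (simp add: block_term_prod L_def colored_blocks_def)
  also have "\<dots> = (\<Prod>i<length s. prod_list (take (Suc i) xi) ^ (ns ! i - next_entry ns i))
         / (\<Prod>i<length s. complex_of_real (real (ns ! i) - t ! i) ^ (s ! i))"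
    by (rule prod_dividef)
  also have "(\<Prod>i<length s. prod_list (take (Suc i) xi) ^ (ns ! i - next_entry ns i)) = (\<Prod>i<length s. xi ! i ^ (ns ! i))"
    using telescoping_powers[of ns xi "length xi"] len ls sorted by simp
  finally show ?thesis by (simp add: L_def prod_dividef)
qed

lemma Di_eq_infsum_block_term:
  assumes "length xi = length s" and "length t = length s"
  shows "Di xi t s = infsum (block_term (colored_blocks s xi t)) (decreasing_tuples (length s))"
  unfolding Di_def decreasing_tuples_def[symmetric]
  by (rule infsum_cong) (use Di_term_eq_block_term[OF assms] in simp)

theorem mainTheorem7:
  fixes s :: "nat list" and xi :: "complex list" and t :: "real list" and r :: nat
  assumes "r \<ge> 1"
    and "length s = r" and "length xi = r" and "length t = r"
    and "\<forall>k\<in>set s. k \<ge> 1"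
    and "s!0 > 1"
    and "condE xi t"
  shows "Di xi t s = alpha0 (colored_word s xi t) 1"
proof -
  define L where "L = colored_blocks s xi t"
  define p where "p = (s ! 0, XL 1 xi (tbar t 0))"
  define L' where "L' = map (\<lambda>i. (s ! i, XL (Suc i) xi (tbar t i))) [1..<r]"
  have lengths: "length xi = length s" "length t = length s" using assms(2-4) by simp_all
  have L_eq: "L = p # L'"
    using assms(1,2) by (simp add: L_def p_def L'_def colored_blocks_def upt_conv_Cons)
  have adm: "admissible (p # L')"
    using admissible_colored_blocks[OF lengths assms(5,7)] by (simp add: L_def[symmetric] L_eq)
  have "Di xi t s = infsum (block_term L) (decreasing_tuples (length L))"
    using Di_eq_infsum_block_term[OF lengths] by (simp add: L_def colored_blocks_def)
  also have "\<dots> = alpha0 (blocks_word L) 1"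
    unfolding L_eq using infsum_block_term_eq_alpha0[OF adm] assms(6) by (simp add: p_def)
  also have "blocks_word L = colored_word s xi t"
    by (simp add: L_def colored_word_eq_blocks_word)
  finally show ?thesis .
qed

end
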